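(* Let $t\geq 1$, $l\geq 1$, and let $C_1,\ldots,C_l$ be fans with $C_i=\{a_{i,1},\ldots,a_{i,m}\}$, simultaneously grounded by a curve $\gamma=\gamma_1\cup\cdots\cup\gamma_m$. If each $a_{i,j}$ intersects $\gamma$ in at most $t$ points, then there are indices $j_1<\cdots<j_r$ with $r=\lfloor\log^{(2l)}_{t+1}m\rfloor$ (the $2l$-times iterated base-$(t+1)$ logarithm) and a subcurve $\gamma'=\gamma'_1\cup\cdots\cup\gamma'_r\subseteq\gamma$ such that (1) the subfans $C'_i=\{a_{i,j_1},\ldots,a_{i,j_r}\}\subseteq C_i$, $1\leq i\leq l$, are simultaneously well-grounded by $\gamma'_1\cup\cdots\cup\gamma'_r$, and (2) $\gamma'_s\supseteq\gamma_{j_s}$ for $1\leq s\leq r$.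
   Context: All curves are simple; no two curves are tangent (a shared interior point is a proper crossing). A fan with apex $v$ is a collection of curves with common endpoint $v$. Let $\gamma$ be a curve with endpoints $p,q$, partitioned into subcurves $\gamma_1,\ldots,\gamma_m$ appearing in this order along $\gamma$ from $p$ to $q$ (consecutive pieces sharing an endpoint). A fan $C=\{a_1,\ldots,a_m\}$ with apex $v$ is grounded by $\gamma_1\cup\cdots\cup\gamma_m$ if $v\notin\gamma$ and each $a_i$ has its other endpoint on $\gamma_i$; well-grounded if in addition each $a_i$ intersects $\gamma$ only within $\gamma_i$. Several fans are simultaneously (well-)grounded by $\gamma_1\cup\cdots\cup\gamma_m$ if each is (well-)grounded with respect to the same partition. *)

theory Defs
  imports "HOL-Analysis.Analysis"
begin

text \<open>A simple curve with two
endpoints is an arc.  A curve g is split into m consecutive subcurves by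
parameters \<sigma> 0 < \<sigma> 1 < ... < \<sigma> m; the j-th piece (1 \<le> j \<le> m)
is the image of g on [\<sigma> (j-1), \<sigma> j].\<close>

definition partition_params :: "(nat \<Rightarrow> real) \<Rightarrow> nat \<Rightarrow> bool" where
  "partition_params \<sigma> m \<longleftrightarrow> 0 \<le> \<sigma> 0 \<and> \<sigma> m \<le> 1 \<and> (\<forall>k<m. \<sigma> k < \<sigma> (Suc k))"

definition piece :: "(real \<Rightarrow> complex) \<Rightarrow> (nat \<Rightarrow> real) \<Rightarrow> nat \<Rightarrow> complex set" where
  "piece g \<sigma> j = g ` {\<sigma> (j - 1) .. \<sigma> j}"

definition whole :: "(real \<Rightarrow> complex) \<Rightarrow> (nat \<Rightarrow> real) \<Rightarrow> nat \<Rightarrow> complex set" where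
  "whole g \<sigma> m = g ` {\<sigma> 0 .. \<sigma> m}"

definition grounded ::
  "(real \<Rightarrow> complex) \<Rightarrow> (nat \<Rightarrow> real) \<Rightarrow> nat \<Rightarrow> complex \<Rightarrow> (nat \<Rightarrow> real \<Rightarrow> complex) \<Rightarrow> bool" where
  "grounded g \<sigma> m v a \<longleftrightarrow> v \<notin> whole g \<sigma> m \<and>
     (\<forall>j\<in>{1..m}. pathstart (a j) = v \<and> pathfinish (a j) \<in> piece g \<sigma> j)"

definition well_grounded ::
  "(real \<Rightarrow> complex) \<Rightarrow> (nat \<Rightarrow> real) \<Rightarrow> nat \<Rightarrow> complex \<Rightarrow> (nat \<Rightarrow> real \<Rightarrow> complex) \<Rightarrow> bool" where
  "well_grounded g \<sigma> m v a \<longleftrightarrow> grounded g \<sigma> m v a \<and>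
     (\<forall>j\<in>{1..m}. path_image (a j) \<inter> whole g \<sigma> m \<subseteq> piece g \<sigma> j)"

text \<open>Iterated base-b logarithm; once a nonpositive value is reached
(logarithm undefined) the iteration is frozen at 0, making the bound trivial.\<close>
fun iter_log :: "real \<Rightarrow> nat \<Rightarrow> real \<Rightarrow> real" where
  "iter_log b 0 x = x"
| "iter_log b (Suc k) x = (let y = iter_log b k x in if y > 0 then log b y else 0)"

end

theory Submission
  imports Defs "HOL-Library.Dual_Ordered_Lattice" "HOL-Library.FuncSet"
begin

text \<open>Parametrise \<open>\<gamma>\<close> by \<open>g\<close> on \<open>[0,1]\<close>; the pieces become disjoint parameter blocks, and each
  fan curve \<open>a i j\<close> contributes its finite set of crossing parameters, at most \<open>t - 1\<close> of which lie
  outside block \<open>j\<close>. If a block has at most \<open>t - 1\<close> points on its right, a pigeonhole argument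
  keeps, out of about \<open>(t + 1)\<^sup>n\<close> blocks, the first one and \<open>n - 1\<close> further blocks lying in a
  single gap of those points; recursing yields \<open>n\<close> blocks none of whose points to the right meet
  a later chosen block. Doing this for every fan and, mirrored, for the left side costs \<open>2 l\<close>
  exponentials, whence the iterated logarithm. Finally each chosen block is stretched to the right
  over the crossings of its own curves, and the stretched blocks are the pieces of \<open>\<gamma>'\<close>.\<close>

definition ordered_blocks :: "('k::linorder \<Rightarrow> real) \<Rightarrow> ('k \<Rightarrow> real) \<Rightarrow> 'k set \<Rightarrow> bool" where
  "ordered_blocks lo hi S \<longleftrightarrow> (\<forall>k\<in>S. lo k < hi k) \<and> (\<forall>k\<in>S. \<forall>k'\<in>S. k < k' \<longrightarrow> hi k \<le> lo k')"

lemma ordered_blocks_subset: "ordered_blocks lo hi S \<Longrightarrow> T \<subseteq> S \<Longrightarrow> ordered_blocks lo hi T"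
  unfolding ordered_blocks_def by blast

lemma card_ordered_blocks_containing_le_2:
  assumes blocks: "ordered_blocks lo hi S" and "finite S"
  shows "card {k\<in>S. lo k \<le> q \<and> q \<le> hi k} \<le> 2"
proof -
  define X where "X = {k\<in>S. lo k \<le> q \<and> q \<le> hi k}"
  have "X \<subseteq> {Min X, Max X}"
  proof
    fix k assume k: "k \<in> X"
    have "finite X" "X \<noteq> {}" using \<open>finite S\<close> k unfolding X_def by auto
    with k have "Min X \<le> k" "k \<le> Max X" "Min X \<in> X" "Max X \<in> X" by simp_all
    moreover have False if "Min X < k" "k < Max X"
    proof -
      have "hi (Min X) \<le> lo k" "hi k \<le> lo (Max X)"
        using blocks that k \<open>Min X \<in> X\<close> \<open>Max X \<in> X\<close> unfolding ordered_blocks_def X_def by blast+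
      then show False using blocks k \<open>Min X \<in> X\<close> \<open>Max X \<in> X\<close> unfolding ordered_blocks_def X_def by force
    qed
    ultimately show "k \<in> {Min X, Max X}" by force
  qed
  then have "card X \<le> card {Min X, Max X}" by (simp add: card_mono)
  also have "\<dots> \<le> 2" by (simp add: card_insert_le_m1)
  finally show ?thesis unfolding X_def .
qed

lemma ordered_blocks_common_gap:
  fixes lo hi :: "'k::linorder \<Rightarrow> real"
  assumes blocks: "ordered_blocks lo hi R" and "finite Q" "d \<in> R" "d' \<in> R"
    and empty: "\<forall>q\<in>Q. \<not> (lo d \<le> q \<and> q \<le> hi d)" "\<forall>q\<in>Q. \<not> (lo d' \<le> q \<and> q \<le> hi d')"
    and same: "card {q\<in>Q. q < lo d} = card {q\<in>Q. q < lo d'}" and "p \<in> Q"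
  shows "\<not> (lo d \<le> p \<and> p \<le> hi d')"
proof
  assume p: "lo d \<le> p \<and> p \<le> hi d'"
  have "hi d < p" "p < lo d'" using empty p \<open>p \<in> Q\<close> by (auto simp: not_le)
  have "d < d'"
  proof (rule ccontr)
    assume "\<not> d < d'"
    then have "hi d' \<le> lo d \<or> d' = d" using blocks \<open>d \<in> R\<close> \<open>d' \<in> R\<close> unfolding ordered_blocks_def by force
    then show False using blocks \<open>d \<in> R\<close> \<open>d' \<in> R\<close> p \<open>hi d < p\<close> \<open>p < lo d'\<close>
      unfolding ordered_blocks_def by force
  qed
  with blocks \<open>d \<in> R\<close> \<open>d' \<in> R\<close> have "lo d < lo d'" unfolding ordered_blocks_def by force
  then have "{q\<in>Q. q < lo d} \<subseteq> {q\<in>Q. q < lo d'}" by auto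
  moreover have "p \<in> {q\<in>Q. q < lo d'} - {q\<in>Q. q < lo d}" using \<open>p \<in> Q\<close> p \<open>p < lo d'\<close> by simp
  ultimately have "{q\<in>Q. q < lo d} \<subset> {q\<in>Q. q < lo d'}" by blast
  then have "card {q\<in>Q. q < lo d} < card {q\<in>Q. q < lo d'}" by (simp add: \<open>finite Q\<close> psubset_card_mono)
  with same show False by simp
qed

text \<open>Pigeonhole over the number of points left of a block: blocks containing no point and having
  equally many points to their left lie in a common gap.\<close>

lemma ordered_blocks_in_one_gap:
  fixes lo hi :: "'k::linorder \<Rightarrow> real"
  assumes blocks: "ordered_blocks lo hi R" and "finite R" "finite Q" "card Q \<le> D"
    and large: "(D + 1) * N + D \<le> card R"
  shows "\<exists>G\<subseteq>R. card G = N \<and> (\<forall>d\<in>G. \<forall>d'\<in>G. \<forall>p\<in>Q. \<not> (lo d \<le> p \<and> p \<le> hi d'))"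
proof (cases N)
  case 0
  then show ?thesis by auto
next
  case (Suc N')
  define Bad where "Bad = {k\<in>R. \<exists>q\<in>Q. lo k \<le> q \<and> q \<le> hi k}"
  define below where "below k = card {q\<in>Q. q < lo k}" for k
  have "Bad = (\<Union>q\<in>Q. {k\<in>R. lo k \<le> q \<and> q \<le> hi k})" unfolding Bad_def by blast
  then have "card Bad \<le> (\<Sum>q\<in>Q. card {k\<in>R. lo k \<le> q \<and> q \<le> hi k})"
    by (simp add: card_UN_le \<open>finite Q\<close>)
  also have "\<dots> \<le> card Q * 2"
    using sum_bounded_above[of Q "\<lambda>q. card {k\<in>R. lo k \<le> q \<and> q \<le> hi k}" 2]
      card_ordered_blocks_containing_le_2[OF blocks \<open>finite R\<close>] by simp
  finally have "card Bad \<le> 2 * D" using \<open>card Q \<le> D\<close> by linarith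
  then have good: "(D + 1) * N' + 1 \<le> card (R - Bad)"
    using large Suc card_Diff_subset[of Bad R] card_mono[of R Bad] \<open>finite R\<close> by (auto simp: Bad_def)
  have "below \<in> (R - Bad) \<rightarrow> {..card Q}" unfolding below_def by (auto intro: card_mono \<open>finite Q\<close>)
  then obtain v where v: "card (below -` {v} \<inter> (R - Bad)) * (card Q + 1) \<ge> card (R - Bad)"
    using pigeonhole_card[of below "R - Bad" "{..card Q}"] \<open>finite R\<close> by auto
  have "N \<le> card (below -` {v} \<inter> (R - Bad))"
  proof (rule ccontr)
    assume "\<not> ?thesis"
    then have "card (below -` {v} \<inter> (R - Bad)) * (card Q + 1) \<le> N' * (D + 1)"
      using Suc \<open>card Q \<le> D\<close> by (intro mult_le_mono) simp_all
    with v good show False by (simp add: mult.commute)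
  qed
  then obtain G where G: "G \<subseteq> below -` {v} \<inter> (R - Bad)" "card G = N"
    by (rule obtain_subset_with_card_n)
  have "\<not> (lo d \<le> p \<and> p \<le> hi d')" if "d \<in> G" "d' \<in> G" "p \<in> Q" for d d' p
  proof (rule ordered_blocks_common_gap[OF blocks \<open>finite Q\<close>])
    have "d \<in> R - Bad" "d' \<in> R - Bad" "below d = below d'" using that G(1) by auto
    then show "d \<in> R" "d' \<in> R" "\<forall>q\<in>Q. \<not> (lo d \<le> q \<and> q \<le> hi d)" "\<forall>q\<in>Q. \<not> (lo d' \<le> q \<and> q \<le> hi d')"
      "card {q\<in>Q. q < lo d} = card {q\<in>Q. q < lo d'}"
      unfolding Bad_def below_def by auto
  qed (rule \<open>p \<in> Q\<close>)
  with G show ?thesis by blast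
qed

text \<open>One selection step loses the first block, the two blocks reaching its end and the \<open>2 D\<close> blocks
  containing its other points, and splits what is left among \<open>D + 1\<close> gaps.\<close>

fun selection_bound :: "nat \<Rightarrow> nat \<Rightarrow> nat" where
  "selection_bound D 0 = 0"
| "selection_bound D (Suc n) = (D + 1) * selection_bound D n + D + 2"

definition right_clear ::
  "('k::linorder \<Rightarrow> real) \<Rightarrow> ('k \<Rightarrow> real) \<Rightarrow> ('k \<Rightarrow> real set) \<Rightarrow> 'k set \<Rightarrow> bool" where
  "right_clear lo hi P C \<longleftrightarrow>
     (\<forall>c\<in>C. \<forall>p\<in>P c. \<forall>d\<in>C. \<forall>d'\<in>C. c < d \<longrightarrow> c < d' \<longrightarrow> \<not> (lo d \<le> p \<and> p \<le> hi d'))"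

definition left_clear ::
  "('k::linorder \<Rightarrow> real) \<Rightarrow> ('k \<Rightarrow> real) \<Rightarrow> ('k \<Rightarrow> real set) \<Rightarrow> 'k set \<Rightarrow> bool" where
  "left_clear lo hi P C \<longleftrightarrow>
     (\<forall>c\<in>C. \<forall>p\<in>P c. \<forall>d\<in>C. \<forall>d'\<in>C. d < c \<longrightarrow> d' < c \<longrightarrow> \<not> (lo d \<le> p \<and> p \<le> hi d'))"

lemma right_clear_subset: "right_clear lo hi P C \<Longrightarrow> C' \<subseteq> C \<Longrightarrow> right_clear lo hi P C'"
  unfolding right_clear_def by blast

lemma right_clear_UN_iff:
  "right_clear lo hi (\<lambda>k. \<Union>i\<in>I. P i k) C \<longleftrightarrow> (\<forall>i\<in>I. right_clear lo hi (P i) C)"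
  unfolding right_clear_def by blast

lemma left_clear_UN_iff:
  "left_clear lo hi (\<lambda>k. \<Union>i\<in>I. P i k) C \<longleftrightarrow> (\<forall>i\<in>I. left_clear lo hi (P i) C)"
  unfolding left_clear_def by blast

lemma card_ordered_blocks_reaching_first_le_2:
  assumes blocks: "ordered_blocks lo hi S" and "finite S" "c \<in> S" "\<forall>k\<in>S. c \<le> k"
  shows "card {k\<in>S. lo k \<le> hi c} \<le> 2"
proof -
  have "{k\<in>S. lo k \<le> hi c} \<subseteq> {k\<in>S. lo k \<le> hi c \<and> hi c \<le> hi k}"
  proof
    fix k assume k: "k \<in> {k\<in>S. lo k \<le> hi c}"
    with assms(4) have "k = c \<or> c < k" by force
    with k blocks \<open>c \<in> S\<close> show "k \<in> {k\<in>S. lo k \<le> hi c \<and> hi c \<le> hi k}"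
      unfolding ordered_blocks_def by force
  qed
  then have "card {k\<in>S. lo k \<le> hi c} \<le> card {k\<in>S. lo k \<le> hi c \<and> hi c \<le> hi k}"
    using \<open>finite S\<close> by (intro card_mono) simp_all
  also have "\<dots> \<le> 2" by (rule card_ordered_blocks_containing_le_2[OF blocks \<open>finite S\<close>])
  finally show ?thesis .
qed

lemma right_clear_insert:
  assumes clear: "right_clear lo hi P C" and beyond: "\<forall>k\<in>C. c < k \<and> hi c < lo k"
    and gap: "\<forall>d\<in>C. \<forall>d'\<in>C. \<forall>p\<in>P c. hi c < p \<longrightarrow> \<not> (lo d \<le> p \<and> p \<le> hi d')"
  shows "right_clear lo hi P (insert c C)"
  unfolding right_clear_def
proof (intro ballI impI)
  fix x p d d' assume "x \<in> insert c C" "p \<in> P x" "d \<in> insert c C" "d' \<in> insert c C" "x < d" "x < d'"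
  show "\<not> (lo d \<le> p \<and> p \<le> hi d')"
  proof (cases "x = c")
    case True
    with \<open>x < d\<close> \<open>x < d'\<close> \<open>d \<in> _\<close> \<open>d' \<in> _\<close> have "d \<in> C" "d' \<in> C" by auto
    with True \<open>p \<in> P x\<close> beyond gap show ?thesis by (cases "p \<le> hi c") force+
  next
    case False
    with \<open>x \<in> insert c C\<close> beyond have "x \<in> C" "c < x" by auto
    with \<open>x < d\<close> \<open>x < d'\<close> \<open>d \<in> _\<close> \<open>d' \<in> _\<close> have "d \<in> C" "d' \<in> C" by auto
    with clear \<open>x \<in> C\<close> \<open>p \<in> P x\<close> \<open>x < d\<close> \<open>x < d'\<close> show ?thesis unfolding right_clear_def by blast
  qed
qed

text \<open>Take the first block, discard the at most two blocks reaching its end, and keep the remaining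
  blocks lying in one gap of its points beyond it.\<close>

lemma exists_right_clear_subset:
  fixes lo hi :: "'k::linorder \<Rightarrow> real"
  assumes "ordered_blocks lo hi S" "finite S"
    and "\<forall>k\<in>S. finite (P k) \<and> card (P k \<inter> {x. hi k < x}) \<le> D"
    and "selection_bound D n \<le> card S"
  shows "\<exists>C\<subseteq>S. card C = n \<and> right_clear lo hi P C"
  using assms
proof (induction n arbitrary: S)
  case 0
  then show ?case by (auto simp: right_clear_def)
next
  case (Suc n)
  note blocks = \<open>ordered_blocks lo hi S\<close>
  have "S \<noteq> {}" using Suc.prems(4) by auto
  define c where "c = Min S"
  have "c \<in> S" "\<forall>k\<in>S. c \<le> k" using \<open>finite S\<close> \<open>S \<noteq> {}\<close> unfolding c_def by auto
  define R where "R = {k\<in>S. hi c < lo k}"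
  define Q where "Q = P c \<inter> {x. hi c < x}"
  have "S = R \<union> {k\<in>S. lo k \<le> hi c}" unfolding R_def by auto
  then have "card S \<le> card R + card {k\<in>S. lo k \<le> hi c}" by (metis card_Un_le)
  with card_ordered_blocks_reaching_first_le_2[OF blocks \<open>finite S\<close> \<open>c \<in> S\<close> \<open>\<forall>k\<in>S. c \<le> k\<close>] Suc.prems(4)
  have large: "(D + 1) * selection_bound D n + D \<le> card R" by simp
  have "finite Q" "card Q \<le> D" using Suc.prems(3) \<open>c \<in> S\<close> unfolding Q_def by auto
  have "R \<subseteq> S" unfolding R_def by auto
  then have "ordered_blocks lo hi R" "finite R"
    using ordered_blocks_subset[OF blocks] finite_subset[OF _ \<open>finite S\<close>] by blast+
  from ordered_blocks_in_one_gap[OF this \<open>finite Q\<close> \<open>card Q \<le> D\<close> large]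
  obtain G where "G \<subseteq> R" "card G = selection_bound D n"
    and gap: "\<forall>d\<in>G. \<forall>d'\<in>G. \<forall>p\<in>Q. \<not> (lo d \<le> p \<and> p \<le> hi d')"
    by blast
  have "G \<subseteq> S" using \<open>G \<subseteq> R\<close> \<open>R \<subseteq> S\<close> by blast
  moreover have "\<forall>k\<in>G. finite (P k) \<and> card (P k \<inter> {x. hi k < x}) \<le> D"
    using Suc.prems(3) \<open>G \<subseteq> S\<close> by blast
  moreover have "selection_bound D n \<le> card G" using \<open>card G = _\<close> by simp
  ultimately obtain C where "C \<subseteq> G" "card C = n" and clear: "right_clear lo hi P C"
    using Suc.IH ordered_blocks_subset[OF blocks] finite_subset[OF _ \<open>finite S\<close>] by meson
  have "lo c < hi c" using blocks \<open>c \<in> S\<close> unfolding ordered_blocks_def by blast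
  have beyond: "\<forall>k\<in>C. c < k \<and> hi c < lo k"
  proof
    fix k assume "k \<in> C"
    then have "k \<in> S" "hi c < lo k" using \<open>C \<subseteq> G\<close> \<open>G \<subseteq> R\<close> unfolding R_def by auto
    moreover from this \<open>lo c < hi c\<close> have "k \<noteq> c" by auto
    ultimately show "c < k \<and> hi c < lo k" using \<open>\<forall>k\<in>S. c \<le> k\<close> le_neq_trans by blast
  qed
  moreover have "\<forall>d\<in>C. \<forall>d'\<in>C. \<forall>p\<in>P c. hi c < p \<longrightarrow> \<not> (lo d \<le> p \<and> p \<le> hi d')"
    using gap \<open>C \<subseteq> G\<close> unfolding Q_def by blast
  ultimately have "right_clear lo hi P (insert c C)" using clear by (rule right_clear_insert[rotated])
  moreover have "c \<notin> C" using beyond by blast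
  ultimately show ?case
    using \<open>C \<subseteq> G\<close> \<open>G \<subseteq> S\<close> \<open>c \<in> S\<close> \<open>card C = n\<close> finite_subset[OF _ \<open>finite S\<close>]
    by (intro exI[of _ "insert c C"]) auto
qed

lemma exists_right_clear_subset_family:
  fixes lo hi :: "'k::linorder \<Rightarrow> real"
  assumes "finite I" "ordered_blocks lo hi S" "finite S"
    and "\<forall>i\<in>I. \<forall>k\<in>S. finite (P i k) \<and> card (P i k \<inter> {x. hi k < x}) \<le> D"
    and "(selection_bound D ^^ card I) n \<le> card S"
  shows "\<exists>C\<subseteq>S. card C = n \<and> (\<forall>i\<in>I. right_clear lo hi (P i) C)"
  using assms
proof (induction I arbitrary: S rule: finite_induct)
  case empty
  then show ?case by (simp, meson obtain_subset_with_card_n)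
next
  case (insert i I)
  have "\<forall>k\<in>S. finite (P i k) \<and> card (P i k \<inter> {x. hi k < x}) \<le> D" using insert.prems(3) by blast
  moreover have "selection_bound D ((selection_bound D ^^ card I) n) \<le> card S"
    using insert.prems(4) insert.hyps by simp
  ultimately obtain C0 where "C0 \<subseteq> S" "card C0 = (selection_bound D ^^ card I) n"
    and "right_clear lo hi (P i) C0"
    using exists_right_clear_subset[OF insert.prems(1,2)] by blast
  moreover have "ordered_blocks lo hi C0" "finite C0"
    using ordered_blocks_subset[OF insert.prems(1) \<open>C0 \<subseteq> S\<close>] finite_subset[OF \<open>C0 \<subseteq> S\<close> insert.prems(2)] .
  moreover have "\<forall>j\<in>I. \<forall>k\<in>C0. finite (P j k) \<and> card (P j k \<inter> {x. hi k < x}) \<le> D"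
    using insert.prems(3) \<open>C0 \<subseteq> S\<close> by blast
  ultimately obtain C where "C \<subseteq> C0" "card C = n" "\<forall>j\<in>I. right_clear lo hi (P j) C"
    using insert.IH by (metis order.refl)
  with \<open>C0 \<subseteq> S\<close> \<open>right_clear lo hi (P i) C0\<close> show ?case
    by (intro exI[of _ C]) (auto intro: right_clear_subset)
qed

instance dual :: (linorder) linorder
  by standard (auto simp: dual_less_eq_iff)

text \<open>Reversing both the order of the indices and the real line turns left into right.\<close>

lemma left_clear_iff_right_clear_dual:
  "left_clear lo hi P C \<longleftrightarrow>
     right_clear (\<lambda>k. - hi (undual k)) (\<lambda>k. - lo (undual k)) (\<lambda>k. uminus ` P (undual k)) (dual ` C)"
  unfolding left_clear_def right_clear_def by auto

lemma ordered_blocks_dual: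
  "ordered_blocks lo hi S \<Longrightarrow> ordered_blocks (\<lambda>k. - hi (undual k)) (\<lambda>k. - lo (undual k)) (dual ` S)"
  unfolding ordered_blocks_def by auto

lemma exists_left_clear_subset_family:
  fixes lo hi :: "'k::linorder \<Rightarrow> real"
  assumes "finite I" "ordered_blocks lo hi S" "finite S"
    and counts: "\<forall>i\<in>I. \<forall>k\<in>S. finite (P i k) \<and> card (P i k \<inter> {x. x < lo k}) \<le> D"
    and "(selection_bound D ^^ card I) n \<le> card S"
  shows "\<exists>C\<subseteq>S. card C = n \<and> (\<forall>i\<in>I. left_clear lo hi (P i) C)"
proof -
  have "uminus ` P i k \<inter> {x. - lo k < x} = uminus ` (P i k \<inter> {x. x < lo k})" for i k
    by force
  then have "card (uminus ` P i k \<inter> {x. - lo k < x}) = card (P i k \<inter> {x. x < lo k})" for i k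
    by (simp add: card_image)
  with counts have counts': "\<forall>i\<in>I. \<forall>k\<in>dual ` S. finite (uminus ` P i (undual k))
      \<and> card (uminus ` P i (undual k) \<inter> {x. - lo (undual k) < x}) \<le> D"
    by auto
  have "(selection_bound D ^^ card I) n \<le> card (dual ` S)"
    using assms(5) by (subst card_image) (simp_all add: inj_on_def)
  from exists_right_clear_subset_family[where P = "\<lambda>i k. uminus ` P i (undual k)",
      OF \<open>finite I\<close> ordered_blocks_dual[OF \<open>ordered_blocks lo hi S\<close>] finite_imageI[OF \<open>finite S\<close>]
      counts' this]
  obtain C' where "C' \<subseteq> dual ` S" "card C' = n"
    and "\<forall>i\<in>I. right_clear (\<lambda>k. - hi (undual k)) (\<lambda>k. - lo (undual k)) (\<lambda>k. uminus ` P i (undual k)) C'"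
    by blast
  moreover have "C' = dual ` (undual ` C')" by (simp add: image_image)
  moreover have "card (undual ` C') = card C'" by (rule card_image) (simp add: inj_on_def dual_eq_iff)
  ultimately show ?thesis
    by (intro exI[of _ "undual ` C'"]) (auto simp: left_clear_iff_right_clear_dual)
qed

text \<open>Each block is stretched to the right over its own points lying before the next block; by right
  clearness, no point of a block beyond its stretched end lies before the end of the last block.\<close>

lemma right_clear_stretch:
  fixes lo hi :: "'k::linorder \<Rightarrow> real"
  assumes clear: "right_clear lo hi Q C" and blocks: "ordered_blocks lo hi C"
    and fin: "\<forall>k\<in>C. finite (Q k)"
  shows "\<exists>A. ordered_blocks lo A C \<and> (\<forall>k\<in>C. hi k \<le> A k)
    \<and> (\<forall>k\<in>C. \<forall>k'\<in>C. \<forall>p\<in>Q k. k < k' \<and> hi k < p \<and> p \<le> hi k' \<longrightarrow> p \<le> A k)"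
proof -
  define E where "E k = insert (hi k) {p\<in>Q k. hi k < p \<and> (\<forall>k'\<in>C. k < k' \<longrightarrow> p < lo k')}" for k
  define A where "A k = Max (E k)" for k
  have fin_E: "finite (E k)" if "k \<in> C" for k using fin that unfolding E_def by auto
  then have A_ge: "p \<le> A k" if "k \<in> C" "p \<in> E k" for k p
    using that unfolding A_def by auto
  have A_in: "A k \<in> E k" if "k \<in> C" for k
    unfolding A_def using fin_E[OF that] by (intro Max_in) (auto simp: E_def)
  have hi_le_A: "hi k \<le> A k" if "k \<in> C" for k using A_ge[OF that] unfolding E_def by simp
  have A_le_lo: "A k \<le> lo k'" if "k \<in> C" "k' \<in> C" "k < k'" for k k'
    using A_in[OF that(1)] blocks that unfolding E_def ordered_blocks_def by force
  have "ordered_blocks lo A C"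
    using blocks hi_le_A A_le_lo unfolding ordered_blocks_def by (meson less_le_trans)
  moreover have "p \<le> A k" if "k \<in> C" "k' \<in> C" "p \<in> Q k" "k < k'" "hi k < p" "p \<le> hi k'" for k k' p
  proof (cases "\<forall>k''\<in>C. k < k'' \<longrightarrow> p < lo k''")
    case True
    with that show ?thesis by (intro A_ge) (auto simp: E_def)
  next
    case False
    with clear that show ?thesis unfolding right_clear_def by (meson not_le)
  qed
  ultimately show ?thesis using hi_le_A by blast
qed

lemma obtain_strict_mono_enumeration:
  fixes C :: "'a::linorder set"
  assumes "finite C"
  obtains J :: "nat \<Rightarrow> 'a" where "\<forall>s\<in>{1..card C}. J s \<in> C" "strict_mono_on {1..card C} J"
proof
  define xs where "xs = sorted_list_of_set C"
  have "length xs = card C" "set xs = C" "sorted_wrt (<) xs"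
    using assms unfolding xs_def by simp_all
  then show "\<forall>s\<in>{1..card C}. xs ! (s - 1) \<in> C" "strict_mono_on {1..card C} (\<lambda>s. xs ! (s - 1))"
    by (auto simp: strict_mono_on_def sorted_wrt_nth_less)
qed

definition cut_points ::
  "('k \<Rightarrow> real) \<Rightarrow> ('k \<Rightarrow> real) \<Rightarrow> ('k \<Rightarrow> real) \<Rightarrow> (nat \<Rightarrow> 'k) \<Rightarrow> nat \<Rightarrow> nat \<Rightarrow> real" where
  "cut_points lo hi A J r s = (if s = 0 then lo (J 1) else if s < r then A (J s) else hi (J r))"

lemma cut_points_around_block:
  assumes mono: "strict_mono_on {1..r} J" and J: "\<forall>s\<in>{1..r}. J s \<in> C"
    and stretched: "ordered_blocks lo A C" "\<forall>k\<in>C. hi k \<le> A k" and s: "s \<in> {1..r}"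
  shows "cut_points lo hi A J r (s - 1) \<le> lo (J s)" "hi (J s) \<le> cut_points lo hi A J r s"
proof -
  show "cut_points lo hi A J r (s - 1) \<le> lo (J s)"
  proof (cases "s = 1")
    case False
    with s have "J (s - 1) < J s" using mono by (intro strict_mono_onD[OF mono]) auto
    with False s J stretched show ?thesis
      unfolding cut_points_def ordered_blocks_def by (auto simp: Suc_le_eq)
  qed (simp add: cut_points_def)
  show "hi (J s) \<le> cut_points lo hi A J r s"
    using s J stretched by (auto simp: cut_points_def)
qed

lemma partition_params_cut_points:
  assumes mono: "strict_mono_on {1..r} J" and J: "\<forall>s\<in>{1..r}. J s \<in> C"
    and "ordered_blocks lo hi C" "\<forall>k\<in>C. 0 \<le> lo k \<and> hi k \<le> 1"
    and stretched: "ordered_blocks lo A C" "\<forall>k\<in>C. hi k \<le> A k" and "1 \<le> r"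
  shows "partition_params (cut_points lo hi A J r) r"
  unfolding partition_params_def
proof (intro conjI allI impI)
  show "0 \<le> cut_points lo hi A J r 0" "cut_points lo hi A J r r \<le> 1"
    using assms by (auto simp: cut_points_def)
  fix k assume "k < r"
  then have "Suc k \<in> {1..r}" by simp
  from cut_points_around_block[OF mono J stretched this] J this \<open>ordered_blocks lo hi C\<close>
  show "cut_points lo hi A J r k < cut_points lo hi A J r (Suc k)"
    unfolding ordered_blocks_def by fastforce
qed

lemma cut_points_separate:
  assumes mono: "strict_mono_on {1..r} J" and J: "\<forall>s\<in>{1..r}. J s \<in> C"
    and "\<forall>k\<in>C. hi k \<le> A k"
    and right: "\<forall>k\<in>C. \<forall>k'\<in>C. \<forall>p\<in>Q k. k < k' \<and> hi k < p \<and> p \<le> hi k' \<longrightarrow> p \<le> A k"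
    and left: "left_clear lo A Q C"
    and s: "s \<in> {1..r}" and p: "p \<in> Q (J s)"
    and "cut_points lo hi A J r 0 \<le> p" "p \<le> cut_points lo hi A J r r"
  shows "cut_points lo hi A J r (s - 1) \<le> p \<and> p \<le> cut_points lo hi A J r s"
proof
  show "cut_points lo hi A J r (s - 1) \<le> p"
  proof (cases "s = 1")
    case False
    with s have idx: "1 \<in> {1..r}" "s - 1 \<in> {1..r}" by auto
    with s False have "J 1 < J s" "J (s - 1) < J s" by (auto intro!: strict_mono_onD[OF mono])
    moreover have "J 1 \<in> C" "J (s - 1) \<in> C" "J s \<in> C" using J idx s by blast+
    ultimately show ?thesis using left p False \<open>cut_points lo hi A J r 0 \<le> p\<close> s
      unfolding left_clear_def cut_points_def by (fastforce simp: not_le)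
  qed (use \<open>cut_points lo hi A J r 0 \<le> p\<close> in simp)
  show "p \<le> cut_points lo hi A J r s"
  proof (cases "s < r")
    case True
    then have "J s < J r" using s by (auto intro!: strict_mono_onD[OF mono])
    moreover have "J s \<in> C" "J r \<in> C" using J s True by auto
    moreover have "p \<le> hi (J r)" using \<open>p \<le> cut_points lo hi A J r r\<close> s by (simp add: cut_points_def)
    ultimately have "p \<le> A (J s)"
      using right p \<open>\<forall>k\<in>C. hi k \<le> A k\<close> by (meson not_le order.trans)
    with True s show ?thesis by (simp add: cut_points_def)
  next
    case False
    with s \<open>p \<le> cut_points lo hi A J r r\<close> show ?thesis by (simp add: cut_points_def)
  qed
qed

lemma card_outside_interval:
  fixes lo hi :: real
  assumes "finite P"
  shows "card (P \<inter> {x. hi < x}) \<le> card (P - {lo..hi})" "card (P \<inter> {x. x < lo}) \<le> card (P - {lo..hi})"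
proof -
  show "card (P \<inter> {x. hi < x}) \<le> card (P - {lo..hi})" using assms by (intro card_mono) auto
  show "card (P \<inter> {x. x < lo}) \<le> card (P - {lo..hi})" using assms by (intro card_mono) auto
qed

text \<open>Two selections, one for each side, separate the chosen blocks from the points of the others.\<close>

lemma obtain_separated_blocks:
  fixes lo hi :: "'k::linorder \<Rightarrow> real" and P :: "'i \<Rightarrow> 'k \<Rightarrow> real set"
  assumes "finite I" "finite S" and blocks: "ordered_blocks lo hi S"
    and counts: "\<forall>i\<in>I. \<forall>k\<in>S. finite (P i k) \<and> card (P i k - {lo k..hi k}) \<le> D"
    and large: "(selection_bound D ^^ (2 * card I)) r \<le> card S"
  obtains C A where "C \<subseteq> S" "card C = r" "ordered_blocks lo A C" "\<forall>k\<in>C. hi k \<le> A k"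
    "\<forall>k\<in>C. \<forall>k'\<in>C. \<forall>p\<in>(\<Union>i\<in>I. P i k). k < k' \<and> hi k < p \<and> p \<le> hi k' \<longrightarrow> p \<le> A k"
    "left_clear lo A (\<lambda>k. \<Union>i\<in>I. P i k) C"
proof -
  have right_counts: "\<forall>i\<in>I. \<forall>k\<in>S. finite (P i k) \<and> card (P i k \<inter> {x. hi k < x}) \<le> D"
    and left_counts: "\<forall>i\<in>I. \<forall>k\<in>S. finite (P i k) \<and> card (P i k \<inter> {x. x < lo k}) \<le> D"
    using counts card_outside_interval le_trans by metis+
  have "(selection_bound D ^^ card I) ((selection_bound D ^^ card I) r) \<le> card S"
    using large by (simp add: mult_2 funpow_add)
  from exists_right_clear_subset_family[OF \<open>finite I\<close> blocks \<open>finite S\<close> right_counts this]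
  obtain C1 where "C1 \<subseteq> S" "card C1 = (selection_bound D ^^ card I) r"
    and "\<forall>i\<in>I. right_clear lo hi (P i) C1" by blast
  then have "right_clear lo hi (\<lambda>k. \<Union>i\<in>I. P i k) C1" by (simp add: right_clear_UN_iff)
  moreover have "ordered_blocks lo hi C1" using ordered_blocks_subset[OF blocks \<open>C1 \<subseteq> S\<close>] .
  moreover have "\<forall>k\<in>C1. finite (\<Union>i\<in>I. P i k)" using counts \<open>C1 \<subseteq> S\<close> \<open>finite I\<close> by auto
  ultimately obtain A where "ordered_blocks lo A C1" "\<forall>k\<in>C1. hi k \<le> A k"
    and right: "\<forall>k\<in>C1. \<forall>k'\<in>C1. \<forall>p\<in>(\<Union>i\<in>I. P i k). k < k' \<and> hi k < p \<and> p \<le> hi k' \<longrightarrow> p \<le> A k"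
    using right_clear_stretch by blast
  have "finite C1" using \<open>C1 \<subseteq> S\<close> \<open>finite S\<close> by (rule finite_subset)
  moreover have "\<forall>i\<in>I. \<forall>k\<in>C1. finite (P i k) \<and> card (P i k \<inter> {x. x < lo k}) \<le> D"
    using left_counts \<open>C1 \<subseteq> S\<close> by blast
  moreover have "(selection_bound D ^^ card I) r \<le> card C1" using \<open>card C1 = _\<close> by simp
  ultimately obtain C where "C \<subseteq> C1" "card C = r" and "\<forall>i\<in>I. left_clear lo A (P i) C"
    using exists_left_clear_subset_family[OF \<open>finite I\<close> \<open>ordered_blocks lo A C1\<close>] by blast
  show thesis
  proof (rule that[of C A])
    show "C \<subseteq> S" using \<open>C \<subseteq> C1\<close> \<open>C1 \<subseteq> S\<close> by blast
    show "ordered_blocks lo A C" using \<open>ordered_blocks lo A C1\<close> \<open>C \<subseteq> C1\<close> by (rule ordered_blocks_subset)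
    show "left_clear lo A (\<lambda>k. \<Union>i\<in>I. P i k) C"
      using \<open>\<forall>i\<in>I. left_clear lo A (P i) C\<close> by (simp add: left_clear_UN_iff)
  qed (use \<open>card C = r\<close> \<open>C \<subseteq> C1\<close> right \<open>\<forall>k\<in>C1. hi k \<le> A k\<close> in blast)+
qed

lemma obtain_partition_of_separated_blocks:
  fixes lo hi A :: "'k::linorder \<Rightarrow> real"
  assumes "finite C" "card C = r" "ordered_blocks lo hi C" "\<forall>k\<in>C. 0 \<le> lo k \<and> hi k \<le> 1"
    and stretched: "ordered_blocks lo A C" "\<forall>k\<in>C. hi k \<le> A k"
    and right: "\<forall>k\<in>C. \<forall>k'\<in>C. \<forall>p\<in>Q k. k < k' \<and> hi k < p \<and> p \<le> hi k' \<longrightarrow> p \<le> A k"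
    and left: "left_clear lo A Q C"
  obtains J \<tau> where "\<forall>s\<in>{1..r}. J s \<in> C" "strict_mono_on {1..r} J" "partition_params \<tau> r"
    "\<forall>s\<in>{1..r}. \<tau> (s - 1) \<le> lo (J s) \<and> hi (J s) \<le> \<tau> s"
    "\<forall>s\<in>{1..r}. \<forall>p\<in>Q (J s). \<tau> 0 \<le> p \<and> p \<le> \<tau> r \<longrightarrow> \<tau> (s - 1) \<le> p \<and> p \<le> \<tau> s"
proof (cases "r = 0")
  case True
  then show thesis by (intro that[of undefined "\<lambda>_. 0"]) (simp_all add: partition_params_def)
next
  case False
  obtain J where J: "\<forall>s\<in>{1..r}. J s \<in> C" and mono: "strict_mono_on {1..r} J"
    using obtain_strict_mono_enumeration \<open>finite C\<close> \<open>card C = r\<close> by metis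
  show thesis
  proof (rule that[OF J mono])
    show "partition_params (cut_points lo hi A J r) r"
      using partition_params_cut_points[OF mono J assms(3,4) stretched] False by simp
    show "\<forall>s\<in>{1..r}. cut_points lo hi A J r (s - 1) \<le> lo (J s) \<and> hi (J s) \<le> cut_points lo hi A J r s"
      using cut_points_around_block[OF mono J stretched] by blast
    show "\<forall>s\<in>{1..r}. \<forall>p\<in>Q (J s). cut_points lo hi A J r 0 \<le> p \<and> p \<le> cut_points lo hi A J r r \<longrightarrow>
        cut_points lo hi A J r (s - 1) \<le> p \<and> p \<le> cut_points lo hi A J r s"
      using cut_points_separate[OF mono J stretched(2) right left] by blast
  qed
qed

theorem obtain_separated_subpartition:
  fixes lo hi :: "'k::linorder \<Rightarrow> real" and P :: "'i \<Rightarrow> 'k \<Rightarrow> real set"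
  assumes "finite I" "finite S" "ordered_blocks lo hi S" "\<forall>k\<in>S. 0 \<le> lo k \<and> hi k \<le> 1"
    and "\<forall>i\<in>I. \<forall>k\<in>S. finite (P i k) \<and> card (P i k - {lo k..hi k}) \<le> D"
    and "(selection_bound D ^^ (2 * card I)) r \<le> card S"
  obtains J \<tau> where "\<forall>s\<in>{1..r}. J s \<in> S" "strict_mono_on {1..r} J" "partition_params \<tau> r"
    "\<forall>s\<in>{1..r}. \<tau> (s - 1) \<le> lo (J s) \<and> hi (J s) \<le> \<tau> s"
    "\<forall>i\<in>I. \<forall>s\<in>{1..r}. \<forall>p\<in>P i (J s). \<tau> 0 \<le> p \<and> p \<le> \<tau> r \<longrightarrow> \<tau> (s - 1) \<le> p \<and> p \<le> \<tau> s"
proof -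
  obtain C A where "C \<subseteq> S" "card C = r" "ordered_blocks lo A C" "\<forall>k\<in>C. hi k \<le> A k"
    "\<forall>k\<in>C. \<forall>k'\<in>C. \<forall>p\<in>(\<Union>i\<in>I. P i k). k < k' \<and> hi k < p \<and> p \<le> hi k' \<longrightarrow> p \<le> A k"
    "left_clear lo A (\<lambda>k. \<Union>i\<in>I. P i k) C"
    using obtain_separated_blocks[OF assms(1,2,3,5,6)] by blast
  moreover have "finite C" using \<open>C \<subseteq> S\<close> assms(2) by (rule finite_subset)
  moreover have "ordered_blocks lo hi C" using assms(3) \<open>C \<subseteq> S\<close> by (rule ordered_blocks_subset)
  moreover have "\<forall>k\<in>C. 0 \<le> lo k \<and> hi k \<le> 1" using assms(4) \<open>C \<subseteq> S\<close> by blast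
  ultimately obtain J \<tau> where "\<forall>s\<in>{1..r}. J s \<in> C" "strict_mono_on {1..r} J" "partition_params \<tau> r"
    "\<forall>s\<in>{1..r}. \<tau> (s - 1) \<le> lo (J s) \<and> hi (J s) \<le> \<tau> s"
    "\<forall>s\<in>{1..r}. \<forall>p\<in>(\<Union>i\<in>I. P i (J s)). \<tau> 0 \<le> p \<and> p \<le> \<tau> r \<longrightarrow> \<tau> (s - 1) \<le> p \<and> p \<le> \<tau> s"
    using obtain_partition_of_separated_blocks[of C r lo hi A "\<lambda>k. \<Union>i\<in>I. P i k"] by blast
  with \<open>C \<subseteq> S\<close> show thesis by (intro that[of J \<tau>]) auto
qed

lemma selection_bound_le_power: "selection_bound D n \<le> (D + 2) ^ n"
proof (induction n)
  case (Suc n)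
  show ?case
  proof (cases n)
    case (Suc n')
    then have "(D + 2) ^ 1 \<le> (D + 2) ^ n" by (intro power_increasing) simp_all
    then have "D + 2 \<le> (D + 2) ^ n" by simp
    moreover have "(D + 1) * selection_bound D n \<le> (D + 1) * (D + 2) ^ n"
      using Suc.IH by (rule mult_le_mono2)
    ultimately show ?thesis by simp
  qed simp
qed simp

lemma funpow_selection_bound_le_iterated_powr:
  "real ((selection_bound D ^^ k) r) \<le> ((\<lambda>z. (real D + 2) powr z) ^^ k) (real r)"
proof (induction k)
  case (Suc k)
  have "real ((selection_bound D ^^ Suc k) r) \<le> real ((D + 2) ^ (selection_bound D ^^ k) r)"
    unfolding funpow.simps(2) o_apply of_nat_le_iff by (rule selection_bound_le_power)
  also have "\<dots> = (real D + 2) powr real ((selection_bound D ^^ k) r)"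
    by (simp add: powr_realpow add.commute)
  also have "\<dots> \<le> (real D + 2) powr (((\<lambda>z. (real D + 2) powr z) ^^ k) (real r))"
    using Suc.IH by (intro powr_mono) simp_all
  finally show ?case by simp
qed simp

lemma iterated_powr_le_of_le_iter_log:
  "1 < b \<Longrightarrow> 0 < y \<Longrightarrow> y \<le> iter_log b k x \<Longrightarrow> ((\<lambda>z. b powr z) ^^ k) y \<le> x"
proof (induction k arbitrary: y)
  case (Suc k)
  define z where "z = iter_log b k x"
  from Suc.prems have "0 < z" "y \<le> log b z" by (auto simp: z_def Let_def split: if_splits)
  with Suc.prems have "b powr y \<le> z" by (simp add: le_log_iff)
  with Suc.IH[of "b powr y"] Suc.prems(1) have "((\<lambda>z. b powr z) ^^ k) (b powr y) \<le> x"
    by (simp add: z_def)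
  then show ?case by (simp add: funpow_Suc_right del: funpow.simps)
qed simp

lemma funpow_selection_bound_floor_iter_log_le:
  "(selection_bound D ^^ k) (nat \<lfloor>iter_log (real D + 2) k (real m)\<rfloor>) \<le> m"
proof (cases "nat \<lfloor>iter_log (real D + 2) k (real m)\<rfloor> = 0")
  case True
  have "(selection_bound D ^^ k) 0 = 0" by (induction k) simp_all
  with True show ?thesis by simp
next
  case False
  then have "0 < real (nat \<lfloor>iter_log (real D + 2) k (real m)\<rfloor>)"
    "real (nat \<lfloor>iter_log (real D + 2) k (real m)\<rfloor>) \<le> iter_log (real D + 2) k (real m)"
    by linarith+
  then have "((\<lambda>z. (real D + 2) powr z) ^^ k) (real (nat \<lfloor>iter_log (real D + 2) k (real m)\<rfloor>)) \<le> real m"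
    by (intro iterated_powr_le_of_le_iter_log) simp_all
  then show ?thesis using funpow_selection_bound_le_iterated_powr order.trans of_nat_le_iff by metis
qed

lemma partition_params_mono: "partition_params \<sigma> m \<Longrightarrow> i \<le> j \<Longrightarrow> j \<le> m \<Longrightarrow> \<sigma> i \<le> \<sigma> j"
  unfolding partition_params_def by (rule lift_Suc_mono_le_ivl[of "{..<m}"]) auto

lemma ordered_blocks_partition_params:
  assumes "partition_params \<sigma> m"
  shows "ordered_blocks (\<lambda>k. \<sigma> (k - 1)) \<sigma> {1..m}" "\<forall>k\<in>{1..m}. 0 \<le> \<sigma> (k - 1) \<and> \<sigma> k \<le> 1"
proof -
  have "\<sigma> (k - 1) < \<sigma> k" if "k \<in> {1..m}" for k
  proof -
    from that obtain j where "k = Suc j" "j < m" by (cases k) auto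
    with assms show ?thesis unfolding partition_params_def by simp
  qed
  then show "ordered_blocks (\<lambda>k. \<sigma> (k - 1)) \<sigma> {1..m}"
    unfolding ordered_blocks_def using partition_params_mono[OF assms] by auto
  have "0 \<le> \<sigma> 0" "\<sigma> m \<le> 1" using assms unfolding partition_params_def by simp_all
  moreover have "\<sigma> 0 \<le> \<sigma> (k - 1)" "\<sigma> k \<le> \<sigma> m" if "k \<in> {1..m}" for k
    using partition_params_mono[OF assms] that by auto
  ultimately show "\<forall>k\<in>{1..m}. 0 \<le> \<sigma> (k - 1) \<and> \<sigma> k \<le> 1" by (meson order.trans)
qed

lemma card_arc_preimage:
  assumes "arc g" "finite (path_image c \<inter> path_image g)"
  shows "finite {x\<in>{0..1}. g x \<in> path_image c}"
    "card {x\<in>{0..1}. g x \<in> path_image c} = card (path_image c \<inter> path_image g)"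
proof -
  have "inj_on g {x\<in>{0..1}. g x \<in> path_image c}"
    using \<open>arc g\<close> unfolding arc_def by (rule conjE) (erule inj_on_subset, blast)
  moreover have "g ` {x\<in>{0..1}. g x \<in> path_image c} = path_image c \<inter> g ` {0..1}" by blast
  then have "g ` {x\<in>{0..1}. g x \<in> path_image c} = path_image c \<inter> path_image g"
    by (simp add: path_image_def)
  ultimately have "bij_betw g {x\<in>{0..1}. g x \<in> path_image c} (path_image c \<inter> path_image g)"
    unfolding bij_betw_def by blast
  then show "finite {x\<in>{0..1}. g x \<in> path_image c}"
    "card {x\<in>{0..1}. g x \<in> path_image c} = card (path_image c \<inter> path_image g)"
    using assms(2) bij_betw_finite bij_betw_same_card by blast+
qed

text \<open>The endpoint of a fan curve on its own piece accounts for one of its \<open>t\<close> crossings.\<close>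

lemma card_arc_preimage_outside:
  assumes "arc g" "finite (path_image c \<inter> path_image g)" "card (path_image c \<inter> path_image g) \<le> t"
    and "pathfinish c \<in> g ` {u..w}" "0 \<le> u" "w \<le> 1"
  shows "card ({x\<in>{0..1}. g x \<in> path_image c} - {u..w}) \<le> t - 1"
proof -
  define P where "P = {x\<in>{0..1}. g x \<in> path_image c}"
  obtain e where "e \<in> {u..w}" "pathfinish c = g e" using assms(4) by blast
  with assms(5,6) have "e \<in> P" unfolding P_def using pathfinish_in_path_image[of c] by auto
  have "P - {u..w} \<subseteq> P - {e}" using \<open>e \<in> {u..w}\<close> by auto
  then have "card (P - {u..w}) \<le> card (P - {e})"
    using card_arc_preimage(1)[OF assms(1,2)] unfolding P_def by (intro card_mono) auto
  also have "\<dots> = card P - 1" using \<open>e \<in> P\<close> by (simp add: card_Diff_singleton)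
  finally show ?thesis using card_arc_preimage(2)[OF assms(1,2)] assms(3) unfolding P_def by linarith
qed

lemma grounded_preimage_counts:
  assumes "arc g" "partition_params \<sigma> m" "grounded g \<sigma> m v a" "j \<in> {1..m}"
    and "finite (path_image (a j) \<inter> path_image g)" "card (path_image (a j) \<inter> path_image g) \<le> t"
  shows "finite {x\<in>{0..1}. g x \<in> path_image (a j)}
    \<and> card ({x\<in>{0..1}. g x \<in> path_image (a j)} - {\<sigma> (j - 1)..\<sigma> j}) \<le> t - 1"
proof
  show "finite {x\<in>{0..1}. g x \<in> path_image (a j)}" by (rule card_arc_preimage(1)[OF assms(1,5)])
  have "pathfinish (a j) \<in> g ` {\<sigma> (j - 1)..\<sigma> j}"
    using assms(3,4) unfolding grounded_def piece_def by blast
  moreover have "0 \<le> \<sigma> (j - 1)" "\<sigma> j \<le> 1"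
    using ordered_blocks_partition_params(2)[OF assms(2)] assms(4) by auto
  ultimately show "card ({x\<in>{0..1}. g x \<in> path_image (a j)} - {\<sigma> (j - 1)..\<sigma> j}) \<le> t - 1"
    using card_arc_preimage_outside[OF assms(1,5,6)] by blast
qed

lemma piece_mono: "\<tau> (s - 1) \<le> \<sigma> (j - 1) \<Longrightarrow> \<sigma> j \<le> \<tau> s \<Longrightarrow> piece g \<sigma> j \<subseteq> piece g \<tau> s"
  unfolding piece_def by auto

lemma well_grounded_subfan:
  assumes "grounded g \<sigma> m v a" "\<sigma> 0 = 0" "\<sigma> m = 1" "partition_params \<tau> r"
    and J: "\<forall>s\<in>{1..r}. J s \<in> {1..m} \<and> \<tau> (s - 1) \<le> \<sigma> (J s - 1) \<and> \<sigma> (J s) \<le> \<tau> s"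
    and separated: "\<forall>s\<in>{1..r}. \<forall>x\<in>{0..1}.
      g x \<in> path_image (a (J s)) \<and> \<tau> 0 \<le> x \<and> x \<le> \<tau> r \<longrightarrow> \<tau> (s - 1) \<le> x \<and> x \<le> \<tau> s"
  shows "well_grounded g \<tau> r v (\<lambda>s. a (J s))"
proof -
  have "whole g \<tau> r \<subseteq> whole g \<sigma> m"
    using assms(2-4) unfolding whole_def partition_params_def by auto
  moreover have "path_image (a (J s)) \<inter> whole g \<tau> r \<subseteq> piece g \<tau> s" if "s \<in> {1..r}" for s
  proof
    fix z assume "z \<in> path_image (a (J s)) \<inter> whole g \<tau> r"
    then obtain x where x: "x \<in> {\<tau> 0..\<tau> r}" "z = g x" "g x \<in> path_image (a (J s))"
      unfolding whole_def by auto
    moreover have "x \<in> {0..1}" using x(1) assms(4) unfolding partition_params_def by auto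
    ultimately have "\<tau> (s - 1) \<le> x \<and> x \<le> \<tau> s" using separated that by auto
    with x show "z \<in> piece g \<tau> s" unfolding piece_def by auto
  qed
  moreover have "piece g \<sigma> (J s) \<subseteq> piece g \<tau> s" if "s \<in> {1..r}" for s
    using J that by (simp add: piece_mono)
  ultimately show ?thesis
    using assms(1) J unfolding well_grounded_def grounded_def by blast
qed

theorem mainTheorem7:
  fixes t l m :: nat
    and g :: "real \<Rightarrow> complex"
    and \<sigma> :: "nat \<Rightarrow> real"
    and v :: "nat \<Rightarrow> complex"
    and a :: "nat \<Rightarrow> nat \<Rightarrow> real \<Rightarrow> complex"
  assumes "t \<ge> 1" and "l \<ge> 1" and "m \<ge> 1"
    and "arc g"
    and "partition_params \<sigma> m" and "\<sigma> 0 = 0" and "\<sigma> m = 1"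
    and "\<forall>i\<in>{1..l}. \<forall>j\<in>{1..m}. arc (a i j)"
    and "\<forall>i\<in>{1..l}. grounded g \<sigma> m (v i) (a i)"
    and "\<forall>i\<in>{1..l}. \<forall>j\<in>{1..m}.
           finite (path_image (a i j) \<inter> path_image g) \<and>
           card (path_image (a i j) \<inter> path_image g) \<le> t"
  shows "\<exists>J :: nat \<Rightarrow> nat. \<exists>\<tau> :: nat \<Rightarrow> real.
           (let r = nat \<lfloor>iter_log (real t + 1) (2 * l) (real m)\<rfloor> in
             (\<forall>s\<in>{1..r}. 1 \<le> J s \<and> J s \<le> m) \<and>
             (\<forall>s\<in>{1..<r}. J s < J (Suc s)) \<and>
             partition_params \<tau> r \<and>
             (\<forall>i\<in>{1..l}. well_grounded g \<tau> r (v i) (\<lambda>s. a i (J s))) \<and>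
             (\<forall>s\<in>{1..r}. piece g \<sigma> (J s) \<subseteq> piece g \<tau> s))"
proof -
  define r where "r = nat \<lfloor>iter_log (real t + 1) (2 * l) (real m)\<rfloor>"
  define P where "P i j = {x\<in>{0..1}. g x \<in> path_image (a i j)}" for i j
  note blocks = ordered_blocks_partition_params[OF \<open>partition_params \<sigma> m\<close>]
  have "\<forall>i\<in>{1..l}. \<forall>j\<in>{1..m}. finite (P i j) \<and> card (P i j - {\<sigma> (j - 1)..\<sigma> j}) \<le> t - 1"
    using grounded_preimage_counts[OF assms(4,5)] assms(9,10) unfolding P_def by blast
  moreover have "(selection_bound (t - 1) ^^ (2 * card {1..l})) r \<le> card {1..m}"
    using funpow_selection_bound_floor_iter_log_le[where D = "t - 1" and k = "2 * l"] \<open>t \<ge> 1\<close>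
    by (simp add: r_def of_nat_diff add.commute)
  ultimately obtain J \<tau> where J: "\<forall>s\<in>{1..r}. J s \<in> {1..m}" "strict_mono_on {1..r} J"
    and "partition_params \<tau> r" and around: "\<forall>s\<in>{1..r}. \<tau> (s - 1) \<le> \<sigma> (J s - 1) \<and> \<sigma> (J s) \<le> \<tau> s"
    and separated: "\<forall>i\<in>{1..l}. \<forall>s\<in>{1..r}. \<forall>p\<in>P i (J s). \<tau> 0 \<le> p \<and> p \<le> \<tau> r \<longrightarrow> \<tau> (s - 1) \<le> p \<and> p \<le> \<tau> s"
    using obtain_separated_subpartition[OF finite_atLeastAtMost finite_atLeastAtMost blocks] by blast
  have "well_grounded g \<tau> r (v i) (\<lambda>s. a i (J s))" if "i \<in> {1..l}" for i
    using well_grounded_subfan[of g \<sigma> m "v i" "a i", OF _ assms(6,7) \<open>partition_params \<tau> r\<close>]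
      assms(9) that J(1) around separated unfolding P_def by blast
  moreover have "J s < J (Suc s)" if "s \<in> {1..<r}" for s
    using that by (intro strict_mono_onD[OF J(2)]) auto
  ultimately show ?thesis using J(1) around \<open>partition_params \<tau> r\<close>
    unfolding r_def[symmetric] Let_def by (intro exI[of _ J] exI[of _ \<tau>]) (auto simp: piece_mono)
qed

end
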